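(* In the setting of the finite-to-infinite convergence (with $\mathbf x^{\mathrm{in}}\in\mathcal X^{\mathrm{rg}}(\alpha,\rho,p)$, $\mathbf X$ the $\mathcal X^{\mathrm{rg}}_{\mathcal T}(\alpha,\rho,p)$-valued solution of (DBM), $\mathbf X^n$ the finite-dimensional solutions on $\mathcal L_n$), let $\mathbf Y:=u(\mathbf X)$, $\mathbf Y^n:=(X^n_{a+1/2}-X^n_{a-1/2})_{a\in\mathcal L_n\cap\hat{\mathbb Z}}$, and define $\mathbf Y^{n,\infty}(t)\in[0,\infty]^{\hat{\mathbb Z}}$ by $Y^{n,\infty}_a(t):=Y^n_a(t)$ if $a\in\mathcal L_n$ and $Y^{n,\infty}_a(t):=\infty$ otherwise. Then almost surely $\mathbf Y^{1,\infty}(\cdot)\ge\mathbf Y^{2,\infty}(\cdot)\ge\cdots\ge\mathbf Y(\cdot)$ coordinatewise at all times.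
   Context: Fixed $\beta\ge1$, $\alpha\in(0,1)$, $\rho>0$, $p>1$. $\hat{\mathbb Z}=\tfrac12+\mathbb Z$; $\mathrm{Av}^p_{\mathcal I}(\mathbf y)=|\mathcal I\cap\hat{\mathbb Z}|^{-1}\sum_{a\in\mathcal I\cap\hat{\mathbb Z}}y_a^p$ (with $(0,m)=(m,0)$ for $m<0$). $\mathcal W=\{\mathbf x\in\mathbb R^{\mathbb Z}:x_i<x_{i+1}\}$, $u(\mathbf x)=(x_{a+1/2}-x_{a-1/2})_{a\in\hat{\mathbb Z}}$. $\mathcal X^{\mathrm{rg}}(\alpha,\rho,p)$: $\mathbf x\in\mathcal W$ with $\sup_{m\ne0}|\mathrm{Av}_{(0,m)}(u(\mathbf x))-\rho||m|^\alpha<\infty$ and $\sup_m\mathrm{Av}^p_{(0,m)}(u(\mathbf x))<\infty$; $\mathcal X^{\mathrm{rg}}_{\mathcal T}(\alpha,\rho,p)$: continuous $\mathcal W$-valued processes with these two suprema bounded uniformly on each $[0,t]$. (DBM): $X_i(t)=X_i(0)+B_i(t)+\beta\int_0^t\phi_i(\mathbf X(s))ds$, $\phi_i(\mathbf x)=\tfrac12\lim_{k\to\infty}\sum_{0<|j-i|\le k}(x_i-x_j)^{-1}$, $B_i$ independent standard Brownian motions; $\mathbf X$ is the unique $\mathcal X^{\mathrm{rg}}_{\mathcal T}(\alpha,\rho,p)$-valued solution from $\mathbf x^{\mathrm{in}}$. $i_n^+=\max\{i:x^{\mathrm{in}}_i<n\}$, $i_n^-=\min\{i:x^{\mathrm{in}}_i>-n\}$,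 $\mathcal L_n=[i_n^-,i_n^+]$; $\mathbf X^n$ is the pathwise unique strong solution, ordered for all times, of $X^n_i(t)=x^{\mathrm{in}}_i+B_i(t)+\beta\int_0^t\tfrac12\sum_{j\in\mathcal L_n\cap\mathbb Z,j\ne i}(X^n_i(s)-X^n_j(s))^{-1}ds$, $i\in\mathcal L_n\cap\mathbb Z$, driven by the same Brownian motions. *)

theory Defs
  imports "HOL-Probability.Probability"
begin

(* A gap index a in 1/2 + Z is encoded by the
   integer k with a = k + 1/2, so the gap u(x)_a = x_{a+1/2} - x_{a-1/2}
   is  x (k+1) - x k. *)

definition gap :: "(int \<Rightarrow> real) \<Rightarrow> int \<Rightarrow> real" where
  "gap x k = x (k + 1) - x k"

definition Wconf :: "(int \<Rightarrow> real) \<Rightarrow> bool" where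
  "Wconf x \<longleftrightarrow> (\<forall>i. x i < x (i + 1))"

(* Av^q_{(0,m)}(y) for m ~= 0; (0,m) = (m,0) if m < 0.
   The half-integers in (0,m) (resp. (m,0)) are k+1/2 with k in [min 0 m, max 0 m). *)
definition AvP :: "real \<Rightarrow> int \<Rightarrow> (int \<Rightarrow> real) \<Rightarrow> real" where
  "AvP q m y = (\<Sum>k\<in>{min 0 m..<max 0 m}. y k powr q) / real_of_int \<bar>m\<bar>"

definition Av :: "int \<Rightarrow> (int \<Rightarrow> real) \<Rightarrow> real" where
  "Av m y = (\<Sum>k\<in>{min 0 m..<max 0 m}. y k) / real_of_int \<bar>m\<bar>"

definition Xrg :: "real \<Rightarrow> real \<Rightarrow> real \<Rightarrow> (int \<Rightarrow> real) \<Rightarrow> bool" where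
  "Xrg \<alpha> \<rho> p x \<longleftrightarrow> Wconf x
     \<and> (\<exists>C. \<forall>m. m \<noteq> 0 \<longrightarrow> \<bar>Av m (gap x) - \<rho>\<bar> * real_of_int \<bar>m\<bar> powr \<alpha> \<le> C)
     \<and> (\<exists>C. \<forall>m. m \<noteq> 0 \<longrightarrow> AvP p m (gap x) \<le> C)"

definition XrgT :: "real \<Rightarrow> real \<Rightarrow> real \<Rightarrow> (int \<Rightarrow> real \<Rightarrow> real) \<Rightarrow> bool" where
  "XrgT \<alpha> \<rho> p X \<longleftrightarrow>
     (\<forall>i. continuous_on {0..} (X i))
     \<and> (\<forall>s\<ge>0. Wconf (\<lambda>i. X i s))
     \<and> (\<forall>t\<ge>0. \<exists>C. \<forall>s\<in>{0..t}. \<forall>m. m \<noteq> 0 \<longrightarrow>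
            \<bar>Av m (gap (\<lambda>i. X i s)) - \<rho>\<bar> * real_of_int \<bar>m\<bar> powr \<alpha> \<le> C)
     \<and> (\<forall>t\<ge>0. \<exists>C. \<forall>s\<in>{0..t}. \<forall>m. m \<noteq> 0 \<longrightarrow>
            AvP p m (gap (\<lambda>i. X i s)) \<le> C)"

definition phi_partial :: "(int \<Rightarrow> real) \<Rightarrow> int \<Rightarrow> nat \<Rightarrow> real" where
  "phi_partial x i k = (\<Sum>j\<in>{i - int k..i + int k} - {i}. 1 / (x i - x j))"

definition phi :: "(int \<Rightarrow> real) \<Rightarrow> int \<Rightarrow> real" where
  "phi x i = (1/2) * lim (phi_partial x i)"

definition iplus :: "(int \<Rightarrow> real) \<Rightarrow> nat \<Rightarrow> int" where
  "iplus x n = (GREATEST i. x i < real n)"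

definition iminus :: "(int \<Rightarrow> real) \<Rightarrow> nat \<Rightarrow> int" where
  "iminus x n = (LEAST i. x i > - real n)"

definition Ln :: "(int \<Rightarrow> real) \<Rightarrow> nat \<Rightarrow> int set" where
  "Ln x n = {iminus x n..iplus x n}"

definition std_BM :: "'a measure \<Rightarrow> (real \<Rightarrow> 'a \<Rightarrow> real) \<Rightarrow> bool" where
  "std_BM M B \<longleftrightarrow>
     (\<forall>t. B t \<in> borel_measurable M)
     \<and> (AE \<omega> in M. B 0 \<omega> = 0 \<and> continuous_on {0..} (\<lambda>t. B t \<omega>))
     \<and> (\<forall>s t. 0 \<le> s \<and> s < t \<longrightarrow>
          distributed M lborel (\<lambda>\<omega>. B t \<omega> - B s \<omega>)
            (\<lambda>x. ennreal (normal_density 0 (sqrt (t - s)) x)))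
     \<and> (\<forall>(n::nat) (ts::nat \<Rightarrow> real). 0 \<le> ts 0 \<and> strict_mono ts \<longrightarrow>
          prob_space.indep_vars M (\<lambda>_. borel)
            (\<lambda>k \<omega>. B (ts (Suc k)) \<omega> - B (ts k) \<omega>) {..<n})"

definition indep_BM_family :: "'a measure \<Rightarrow> (int \<Rightarrow> real \<Rightarrow> 'a \<Rightarrow> real) \<Rightarrow> bool" where
  "indep_BM_family M B \<longleftrightarrow>
     (\<forall>i. std_BM M (B i))
     \<and> prob_space.indep_vars M (\<lambda>_. Pi\<^sub>M {0..} (\<lambda>_. borel))
          (\<lambda>i \<omega>. restrict (\<lambda>t. B i t \<omega>) {0..}) UNIV"

definition DBM_path :: "real \<Rightarrow> real \<Rightarrow> real \<Rightarrow> real \<Rightarrow> (int \<Rightarrow> real)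
      \<Rightarrow> (int \<Rightarrow> real \<Rightarrow> real) \<Rightarrow> (int \<Rightarrow> real \<Rightarrow> real) \<Rightarrow> bool" where
  "DBM_path \<beta> \<alpha> \<rho> p xin Bw X \<longleftrightarrow>
     XrgT \<alpha> \<rho> p X
     \<and> (\<forall>i. \<forall>s\<ge>0. convergent (phi_partial (\<lambda>j. X j s) i))
     \<and> (\<forall>i. \<forall>t\<ge>0. set_integrable lborel {0..t} (\<lambda>s. phi (\<lambda>j. X j s) i)
          \<and> X i t = xin i + Bw i t + \<beta> * (LINT s:{0..t}|lborel. phi (\<lambda>j. X j s) i))"

definition finite_DBM_path :: "real \<Rightarrow> int set \<Rightarrow> (int \<Rightarrow> real)
      \<Rightarrow> (int \<Rightarrow> real \<Rightarrow> real) \<Rightarrow> (int \<Rightarrow> real \<Rightarrow> real) \<Rightarrow> bool" where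
  "finite_DBM_path \<beta> L xin Bw Xn \<longleftrightarrow>
     (\<forall>i\<in>L. continuous_on {0..} (Xn i))
     \<and> (\<forall>i\<in>L. \<forall>j\<in>L. i < j \<longrightarrow> (\<forall>t\<ge>0. Xn i t < Xn j t))
     \<and> (\<forall>i\<in>L. \<forall>t\<ge>0.
          set_integrable lborel {0..t}
            (\<lambda>s. (1/2) * (\<Sum>j\<in>L - {i}. 1 / (Xn i s - Xn j s)))
          \<and> Xn i t = xin i + Bw i t
              + \<beta> * (LINT s:{0..t}|lborel. (1/2) * (\<Sum>j\<in>L - {i}. 1 / (Xn i s - Xn j s))))"

(* Y^{n,oo}_a(t), a = k + 1/2: the gap of X^n if a \<in> L_n, otherwise +oo *)
definition Yinf :: "int set \<Rightarrow> (int \<Rightarrow> real \<Rightarrow> real) \<Rightarrow> int \<Rightarrow> real \<Rightarrow> ereal" where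
  "Yinf L Xn k t = (if k \<in> L \<and> k + 1 \<in> L then ereal (Xn (k + 1) t - Xn k t) else \<infinity>)"

end

theory Submission
  imports Defs
begin

(* The statement is pathwise: on the almost sure event where
   X and all X^n solve their equations with the same Brownian paths, fix a
   window L_n = {a..b}.  For each of X^n, X^{n+1} and X, the drift of a gap
   X_{k+1} - X_k inside the window is at most the "window gap drift" of the
   finite system on {a..b}, with equality for X^n itself: particles outside
   the gap push its two ends together (gap_drift_antimono,
   phi_gap_le_gap_drift).  The window gap drift is one-sided Lipschitz in the
   gaps (gap_drift_lower_bound), so the differences D_m of the gaps of X^n
   and of the compared system vanish at time 0 and can only decrease through
   their own size and their negative parts.  A one-sided Gronwall argument
   (locale one_sided_gronwall) then gives D_m \<ge> 0 (window_comparison).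
   Finally the windows L_n increase with n (Ln_mono) because x^in grows
   linearly at both ends, so Y^{n,oo} is monotone in n. *)

lemma Wconf_mono:
  assumes "Wconf x" "i < j"
  shows "x i < x j"
proof -
  have "x i < x (i + 1 + int n)" for n :: nat
  proof (induction n)
    case 0 then show ?case using assms(1) unfolding Wconf_def by simp
  next
    case (Suc n)
    have "x (i + 1 + int n) < x (i + 1 + int n + 1)" using assms(1) unfolding Wconf_def by blast
    then show ?case using Suc by (simp add: add.assoc)
  qed
  from this[of "nat (j - i - 1)"] show ?thesis using assms by simp
qed

lemma telescope:
  fixes x :: "int \<Rightarrow> real"
  assumes "i \<le> j"
  shows "x j - x i = (\<Sum>m\<in>{i..<j}. x (m + 1) - x m)"
  using assms
proof (induction j rule: int_ge_induct)
  case base then show ?case by simp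
next
  case (step j)
  have "{i..<j + 1} = insert j {i..<j}" using step by auto
  then show ?case using step by simp
qed

section \<open>The drift of a gap in a finite system\<close>

definition finite_drift :: "int set \<Rightarrow> (int \<Rightarrow> real) \<Rightarrow> int \<Rightarrow> real" where
  "finite_drift L x i = (1/2) * (\<Sum>j\<in>L - {i}. 1 / (x i - x j))"

definition gap_drift :: "int set \<Rightarrow> (int \<Rightarrow> real) \<Rightarrow> int \<Rightarrow> real" where
  "gap_drift L x k = finite_drift L x (k + 1) - finite_drift L x k"

(* Twice the contribution of a third particle j to the gap drift. *)
definition pair_term :: "(int \<Rightarrow> real) \<Rightarrow> int \<Rightarrow> int \<Rightarrow> real" where
  "pair_term x k j = 1 / (x (k + 1) - x j) - 1 / (x k - x j)"

lemma gap_drift_split: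
  assumes "finite L" "k \<in> L" "k + 1 \<in> L"
  shows "gap_drift L x k = 1 / (x (k + 1) - x k) + (1/2) * (\<Sum>j\<in>L - {k, k + 1}. pair_term x k j)"
proof -
  have L1: "L - {k + 1} = insert k (L - {k, k + 1})" and L0: "L - {k} = insert (k + 1) (L - {k, k + 1})"
    using assms by auto
  have fin: "finite (L - {k, k + 1})" using assms by auto
  have out: "k \<notin> L - {k, k + 1}" "k + 1 \<notin> L - {k, k + 1}" by auto
  have "1 / (x k - x (k + 1)) = - (1 / (x (k + 1) - x k))"
    by (metis minus_diff_eq divide_minus_right)
  moreover have "gap_drift L x k
      = (1/2) * ((\<Sum>j\<in>L - {k + 1}. 1 / (x (k + 1) - x j)) - (\<Sum>j\<in>L - {k}. 1 / (x k - x j)))"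
    unfolding gap_drift_def finite_drift_def by (simp add: right_diff_distrib)
  ultimately show ?thesis
    unfolding pair_term_def L1 L0 sum.insert[OF fin out(1)] sum.insert[OF fin out(2)]
      sum_subtractf
    by (simp add: algebra_simps)
qed

(* A particle outside the gap repels the near end of the gap more strongly
   than the far end, so it pushes the two ends together. *)
lemma pair_term_nonpos:
  assumes "strict_mono_on L x" "k \<in> L" "k + 1 \<in> L" "j \<in> L" "j \<noteq> k" "j \<noteq> k + 1"
  shows "pair_term x k j \<le> 0"
proof -
  have gap: "x k < x (k + 1)" using assms by (auto dest: strict_mono_onD)
  have "1 / (x (k + 1) - x j) \<le> 1 / (x k - x j)"
  proof (cases "j > k + 1")
    case True
    then have "x (k + 1) < x j" using assms by (auto dest: strict_mono_onD)
    then show ?thesis using gap by (simp add: divide_simps)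
  next
    case False
    then have "x j < x k" using assms by (auto dest: strict_mono_onD)
    then show ?thesis using gap by (simp add: divide_simps)
  qed
  then show ?thesis unfolding pair_term_def by simp
qed

lemma gap_drift_antimono:
  assumes "finite V" "L \<subseteq> V" "k \<in> L" "k + 1 \<in> L" "strict_mono_on V x"
  shows "gap_drift V x k \<le> gap_drift L x k"
proof -
  have sub: "L - {k, k + 1} \<subseteq> V - {k, k + 1}" using assms by auto
  have "(\<Sum>j\<in>(V - {k, k + 1}) - (L - {k, k + 1}). pair_term x k j) \<le> 0"
    using assms by (intro sum_nonpos pair_term_nonpos[OF assms(5)]) auto
  moreover have "(\<Sum>j\<in>V - {k, k + 1}. pair_term x k j)
      = (\<Sum>j\<in>L - {k, k + 1}. pair_term x k j) + (\<Sum>j\<in>(V - {k, k + 1}) - (L - {k, k + 1}). pair_term x k j)"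
    using sum.subset_diff[OF sub] assms(1) by (simp add: add.commute)
  moreover have "finite L" using finite_subset[OF assms(2,1)] .
  then have "gap_drift L x k = 1 / (x (k + 1) - x k) + (1/2) * (\<Sum>j\<in>L - {k, k + 1}. pair_term x k j)"
    using gap_drift_split assms by blast
  moreover have "gap_drift V x k = 1 / (x (k + 1) - x k) + (1/2) * (\<Sum>j\<in>V - {k, k + 1}. pair_term x k j)"
    using gap_drift_split assms by blast
  ultimately show ?thesis by linarith
qed

lemma phi_gap_le_gap_drift:
  assumes W: "Wconf x" and conv: "convergent (phi_partial x k)" "convergent (phi_partial x (k + 1))"
    and L: "L = {a..b}" "k \<in> L" "k + 1 \<in> L"
  shows "phi x (k + 1) - phi x k \<le> gap_drift L x k"
proof -
  have mono: "strict_mono_on U x" for U using Wconf_mono[OF W] by (auto intro: strict_mono_onI)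
  have partial: "phi_partial x (k + 1) m - phi_partial x k m \<le> 2 * gap_drift L x k"
    if m: "m \<ge> nat (b - a) + 1" for m :: nat
  proof -
    define U where "U = {k + 1 - int m..k + int m}"
    have U: "finite U" "L \<subseteq> U" unfolding U_def using L m by auto
    have e1: "{k + 1 - int m..k + 1 + int m} - {k + 1} = insert (k + 1 + int m) (U - {k + 1})"
      and e2: "{k - int m..k + int m} - {k} = insert (k - int m) (U - {k})"
      unfolding U_def using m by auto
    have "k + 1 + int m \<notin> U - {k + 1}" "k - int m \<notin> U - {k}" unfolding U_def using m by auto
    then have "phi_partial x (k + 1) m - phi_partial x k m
        = 2 * gap_drift U x k + 1 / (x (k + 1) - x (k + 1 + int m)) - 1 / (x k - x (k - int m))"
      unfolding phi_partial_def gap_drift_def finite_drift_def e1 e2 using U(1) by (simp add: algebra_simps)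
    moreover have "1 / (x (k + 1) - x (k + 1 + int m)) \<le> 0" "1 / (x k - x (k - int m)) \<ge> 0"
      using Wconf_mono[OF W, of "k + 1" "k + 1 + int m"] Wconf_mono[OF W, of "k - int m" k] m
      by (simp_all add: divide_simps)
    moreover have "gap_drift U x k \<le> gap_drift L x k"
      using gap_drift_antimono[OF U L(2,3) mono] .
    ultimately show ?thesis by linarith
  qed
  have "(\<lambda>m. phi_partial x (k + 1) m - phi_partial x k m)
          \<longlonglongrightarrow> lim (phi_partial x (k + 1)) - lim (phi_partial x k)"
    using conv by (intro tendsto_diff) (simp_all add: convergent_LIMSEQ_iff)
  then have "lim (phi_partial x (k + 1)) - lim (phi_partial x k) \<le> 2 * gap_drift L x k"
    by (rule LIMSEQ_le_const2) (use partial in auto)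
  then show ?thesis unfolding phi_def by simp
qed


section \<open>A one-sided Lipschitz bound for the gap drift\<close>

lemma inv_diff_bound:
  fixes u v c :: real
  assumes "c > 0" "u \<ge> c" "v \<ge> c"
  shows "\<bar>1 / u - 1 / v\<bar> \<le> \<bar>u - v\<bar> / c^2"
proof -
  have "\<bar>1 / u - 1 / v\<bar> = \<bar>u - v\<bar> / (u * v)"
    using assms by (simp add: field_simps abs_minus_commute)
  also have "\<dots> \<le> \<bar>u - v\<bar> / c^2"
    using assms unfolding power2_eq_square by (intro divide_left_mono mult_mono) auto
  finally show ?thesis .
qed

(* A pair term has the shape 1/(A + g) - 1/A, with A the distance of the
   third particle to the near end of the gap and g the gap.  On [c,oo) this is
   increasing in A and (1/c^2)-Lipschitz in g, hence the one-sided bound. *)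
lemma pair_response_bound:
  fixes A1 A2 g1 g2 c :: real
  assumes c: "c > 0" and "A1 \<ge> c" "A2 \<ge> c" "g1 \<ge> c" "g2 \<ge> c"
  shows "(1 / (A1 + g1) - 1 / A1) - (1 / (A2 + g2) - 1 / A2)
           \<ge> - (2 / c^2) * max 0 (A2 - A1) - (1 / c^2) * \<bar>g1 - g2\<bar>"
proof -
  have lip_g: "\<bar>1 / (A1 + g1) - 1 / (A1 + g2)\<bar> \<le> \<bar>g1 - g2\<bar> / c^2"
    using inv_diff_bound[of c "A1 + g1" "A1 + g2"] assms by auto
  have mono_A: "(1 / (A1 + g2) - 1 / A1) - (1 / (A2 + g2) - 1 / A2) \<ge> - (2 / c^2) * max 0 (A2 - A1)"
  proof (cases "A1 \<ge> A2")
    case True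
    have "g2 / (A1 * (A1 + g2)) \<le> g2 / (A2 * (A2 + g2))"
      using assms True by (intro divide_left_mono mult_mono) auto
    moreover have "1 / (A + g2) - 1 / A = - (g2 / (A * (A + g2)))" if "A \<ge> c" for A
      using assms that by (simp add: field_simps)
    ultimately show ?thesis using True assms by simp
  next
    case False
    have "\<bar>1 / (A1 + g2) - 1 / (A2 + g2)\<bar> \<le> \<bar>A1 - A2\<bar> / c^2" "\<bar>1 / A1 - 1 / A2\<bar> \<le> \<bar>A1 - A2\<bar> / c^2"
      using inv_diff_bound[of c "A1 + g2" "A2 + g2"] inv_diff_bound[of c A1 A2] assms by auto
    moreover have "(2 / c^2) * max 0 (A2 - A1) = 2 * (\<bar>A1 - A2\<bar> / c^2)" using False by auto
    ultimately show ?thesis unfolding abs_le_iff by linarith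
  qed
  show ?thesis using lip_g mono_A by (auto simp: abs_le_iff)
qed

lemma distance_ge_min_gap:
  fixes z :: "int \<Rightarrow> real"
  assumes c: "c > 0" and gaps: "\<And>m. a \<le> m \<Longrightarrow> m < b \<Longrightarrow> c \<le> gap z m"
    and ij: "a \<le> i" "i < j" "j \<le> b"
  shows "c \<le> z j - z i"
proof -
  have "z j - z i = (\<Sum>m\<in>{i..<j}. gap z m)" unfolding gap_def using ij by (intro telescope) auto
  also have "\<dots> \<ge> gap z i"
    using ij gaps c by (intro member_le_sum) (auto intro: order.trans[of 0 c])
  finally show ?thesis using gaps ij by force
qed

lemma distance_shortfall:
  fixes x y :: "int \<Rightarrow> real"
  assumes "a \<le> i" "i \<le> j" "j \<le> b"
  shows "(x j - x i) - (y j - y i) \<le> (\<Sum>m\<in>{a..<b}. max 0 (gap x m - gap y m))"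
proof -
  have "(x j - x i) - (y j - y i) = (\<Sum>m\<in>{i..<j}. gap x m - gap y m)"
    using telescope[of i j x] telescope[of i j y] assms by (simp add: gap_def sum_subtractf)
  also have "\<dots> \<le> (\<Sum>m\<in>{i..<j}. max 0 (gap x m - gap y m))" by (intro sum_mono) auto
  also have "\<dots> \<le> (\<Sum>m\<in>{a..<b}. max 0 (gap x m - gap y m))" using assms by (intro sum_mono2) auto
  finally show ?thesis .
qed

lemma pair_term_lower_bound:
  fixes x y :: "int \<Rightarrow> real"
  assumes c: "c > 0"
    and gx: "\<And>m. a \<le> m \<Longrightarrow> m < b \<Longrightarrow> c \<le> gap x m"
    and gy: "\<And>m. a \<le> m \<Longrightarrow> m < b \<Longrightarrow> c \<le> gap y m"
    and k: "a \<le> k" "k < b" and j: "j \<in> {a..b} - {k, k + 1}"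
  defines "N \<equiv> \<Sum>m\<in>{a..<b}. max 0 (gap x m - gap y m)"
  shows "pair_term y k j - pair_term x k j \<ge> - (2 / c^2) * N - (1 / c^2) * \<bar>gap y k - gap x k\<bar>"
proof -
  have N0: "N \<ge> 0" unfolding N_def by (intro sum_nonneg) auto
  (* A z is the distance from j to the nearer end of the gap k *)
  obtain A where A: "\<And>z. pair_term z k j = 1 / (A z + gap z k) - 1 / A z"
    and Ac: "c \<le> A x" "c \<le> A y" and AN: "A x - A y \<le> N"
  proof (cases "j > k + 1")
    case True
    show ?thesis
    proof (rule that[of "\<lambda>z. z j - z (k + 1)"])
      show "pair_term z k j = 1 / ((z j - z (k + 1)) + gap z k) - 1 / (z j - z (k + 1))" for z
      proof -
        have flip: "1 / (u - v) = - (1 / (v - u))" for u v :: real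
          by (metis minus_diff_eq divide_minus_right)
        show ?thesis unfolding pair_term_def gap_def
          using flip[of "z (k + 1)" "z j"] flip[of "z k" "z j"] by simp
      qed
      show "c \<le> x j - x (k + 1)" "c \<le> y j - y (k + 1)"
        using distance_ge_min_gap[where z=x and a=a and b=b, OF c gx] distance_ge_min_gap[where z=y and a=a and b=b, OF c gy] True j k by auto
      show "(x j - x (k + 1)) - (y j - y (k + 1)) \<le> N"
        unfolding N_def using distance_shortfall True j k by auto
    qed
  next
    case False
    then have "j < k" using j by auto
    show ?thesis
    proof (rule that[of "\<lambda>z. z k - z j"])
      show "pair_term z k j = 1 / ((z k - z j) + gap z k) - 1 / (z k - z j)" for z
        unfolding pair_term_def gap_def by simp
      show "c \<le> x k - x j" "c \<le> y k - y j"
        using distance_ge_min_gap[where z=x and a=a and b=b, OF c gx] distance_ge_min_gap[where z=y and a=a and b=b, OF c gy] \<open>j < k\<close> j k by auto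
      show "(x k - x j) - (y k - y j) \<le> N"
        unfolding N_def using distance_shortfall \<open>j < k\<close> j k by auto
    qed
  qed
  have "pair_term y k j - pair_term x k j
          \<ge> - (2 / c^2) * max 0 (A x - A y) - (1 / c^2) * \<bar>gap y k - gap x k\<bar>"
    unfolding A using pair_response_bound[OF c Ac(2,1)] gx gy k by auto
  moreover have "(2 / c^2) * max 0 (A x - A y) \<le> (2 / c^2) * N"
    using AN N0 by (intro mult_left_mono) auto
  ultimately show ?thesis by linarith
qed

lemma gap_drift_lower_bound:
  fixes x y :: "int \<Rightarrow> real"
  assumes c: "c > 0"
    and gx: "\<And>m. a \<le> m \<Longrightarrow> m < b \<Longrightarrow> c \<le> gap x m"
    and gy: "\<And>m. a \<le> m \<Longrightarrow> m < b \<Longrightarrow> c \<le> gap y m"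
    and k: "a \<le> k" "k < b"
  shows "gap_drift {a..b} y k - gap_drift {a..b} x k
           \<ge> - ((1 + real (card {a..b})) / c^2)
               * (\<bar>gap y k - gap x k\<bar> + (\<Sum>m\<in>{a..<b}. max 0 (gap x m - gap y m)))"
proof -
  define N where "N = (\<Sum>m\<in>{a..<b}. max 0 (gap x m - gap y m))"
  define d where "d = \<bar>gap y k - gap x k\<bar>"
  define S where "S = {a..b} - {k, k + 1}"
  define e where "e = 1 / c^2"
  have N0: "N \<ge> 0" unfolding N_def by (intro sum_nonneg) auto
  have e0: "e \<ge> 0" unfolding e_def by simp
  have d0: "d \<ge> 0" unfolding d_def by simp
  have cardS: "real (card S) \<le> real (card {a..b})" unfolding S_def by (intro of_nat_mono card_mono) auto
  have pairs: "real (card S) * (- (2 * e) * N - e * d) \<le> (\<Sum>j\<in>S. pair_term y k j - pair_term x k j)"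
    using pair_term_lower_bound[OF c gx gy k] unfolding S_def N_def d_def e_def
    by (intro sum_bounded_below) auto
  have own: "1 / gap y k - 1 / gap x k \<ge> - (e * d)"
    using inv_diff_bound[of c "gap y k" "gap x k"] gx gy k c unfolding e_def d_def
    by (auto simp: abs_le_iff)
  have split: "gap_drift {a..b} y k - gap_drift {a..b} x k
      = (1 / gap y k - 1 / gap x k) + (1/2) * (\<Sum>j\<in>S. pair_term y k j - pair_term x k j)"
    using gap_drift_split[of "{a..b}" k x] gap_drift_split[of "{a..b}" k y] k
    unfolding S_def gap_def sum_subtractf by (simp add: algebra_simps)
  have "- ((1 + real (card {a..b})) / c^2) * (d + N) = - (1 + real (card {a..b})) * e * (d + N)"
    unfolding e_def by (simp add: minus_divide_left)
  also have "\<dots> \<le> - (e * d) + (1/2) * (real (card S) * (- (2 * e) * N - e * d))"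
  proof -
    have "real (card S) * (e * N) \<le> real (card {a..b}) * (e * N)"
      "real (card S) * (e * d) \<le> real (card {a..b}) * (e * d)"
      using e0 N0 d0 cardS by (intro mult_right_mono; simp)+
    moreover have "0 \<le> e * N" "0 \<le> real (card S) * (e * d)" using e0 N0 d0 by simp_all
    ultimately show ?thesis by (simp add: algebra_simps)
  qed
  also have "\<dots> \<le> gap_drift {a..b} y k - gap_drift {a..b} x k"
    unfolding split using own pairs by linarith
  finally show ?thesis unfolding N_def d_def .
qed


lemma integral_form_start:
  fixes Z g :: "real \<Rightarrow> real"
  assumes "set_integrable lborel {0..0} g \<and> Z 0 = \<beta> * (LINT s:{0..0}|lborel. g s)"
  shows "Z 0 = 0"
  using assms set_borel_integral_eq_integral(2)[of "{0..0}" g] by simp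

lemma integral_form_increment:
  fixes Z g G :: "real \<Rightarrow> real"
  assumes Z: "\<And>t. t \<in> {0..T} \<Longrightarrow> set_integrable lborel {0..t} g \<and> Z t = \<beta> * (LINT s:{0..t}|lborel. g s)"
    and G: "\<And>s. s \<in> {0..T} \<Longrightarrow> G s \<le> g s" and cG: "continuous_on {0..T} G"
    and \<beta>: "\<beta> \<ge> 0" and rt: "0 \<le> r" "r \<le> t" "t \<le> T"
  shows "\<beta> * integral {r..t} G \<le> Z t - Z r"
proof -
  have HK: "g integrable_on {0..u} \<and> Z u = \<beta> * integral {0..u} g" if "u \<in> {0..T}" for u
    using Z[OF that] set_borel_integral_eq_integral[of "{0..u}" g] by auto
  have int_t: "g integrable_on {0..t}" using HK rt by auto
  have "integral {0..t} g = integral {0..r} g + integral {r..t} g"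
    using Henstock_Kurzweil_Integration.integral_combine[OF rt(1,2) int_t] by simp
  then have "Z t - Z r = \<beta> * integral {r..t} g"
    using HK[of t] HK[of r] rt by (simp add: distrib_left)
  moreover have "integral {r..t} G \<le> integral {r..t} g"
  proof (rule integral_le)
    show "G integrable_on {r..t}"
      using rt by (intro integrable_continuous_interval continuous_on_subset[OF cG]) auto
    show "g integrable_on {r..t}" by (rule integrable_subinterval_real[OF int_t]) (use rt in auto)
  qed (use G rt in auto)
  ultimately show ?thesis using \<beta> by (simp add: mult_left_mono)
qed

section \<open>A one-sided Gronwall argument\<close>

lemma last_nonneg_time:
  fixes f :: "real \<Rightarrow> real"
  assumes cont: "continuous_on {t0..s} f" and "t0 \<le> s" "f t0 \<ge> 0" "f s < 0"
  obtains r where "t0 \<le> r" "r < s" "f r \<ge> 0" "\<And>u. u \<in> {r..s} \<Longrightarrow> f u \<le> 0"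
proof -
  define A where "A = {t0..s} \<inter> f -` {0..}"
  have closedA: "closed A" unfolding A_def by (rule continuous_closed_preimage[OF cont]) auto
  have t0A: "t0 \<in> A" unfolding A_def using assms by auto
  have bddA: "bdd_above A" unfolding A_def by (rule bdd_aboveI[of _ s]) auto
  define r where "r = Sup A"
  have rA: "r \<in> A" unfolding r_def using closed_contains_Sup t0A bddA closedA by blast
  have r: "t0 \<le> r" "r \<le> s" "f r \<ge> 0"
    using rA cSup_upper[OF t0A bddA] unfolding A_def r_def by auto
  then have "r < s" using assms by (cases "r = s") auto
  have "{r<..s} \<subseteq> {t0..s} \<inter> f -` {..0}"
  proof
    fix u assume u: "u \<in> {r<..s}"
    have "u \<notin> A" using cSup_upper[OF _ bddA, of u] u unfolding r_def by auto
    then show "u \<in> {t0..s} \<inter> f -` {..0}" using u r unfolding A_def by auto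
  qed
  then have "closure {r<..s} \<subseteq> {t0..s} \<inter> f -` {..0}"
    by (intro closure_minimal continuous_closed_preimage[OF cont]) auto
  then have "f u \<le> 0" if "u \<in> {r..s}" for u using that \<open>r < s\<close> by auto
  with r \<open>r < s\<close> show ?thesis using that by blast
qed

locale one_sided_gronwall =
  fixes K :: "int set" and D :: "int \<Rightarrow> real \<Rightarrow> real" and C T :: real
  assumes finK: "finite K" and C: "C \<ge> 0"
    and cont: "\<And>k. k \<in> K \<Longrightarrow> continuous_on {0..T} (D k)"
    and drift: "\<And>k r t. k \<in> K \<Longrightarrow> 0 \<le> r \<Longrightarrow> r \<le> t \<Longrightarrow> t \<le> T \<Longrightarrow>
        D k t - D k r \<ge> - C * integral {r..t} (\<lambda>s. \<bar>D k s\<bar> + (\<Sum>m\<in>K. max 0 (- D m s)))"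
begin

definition neg :: "real \<Rightarrow> real" where
  "neg s = (\<Sum>m\<in>K. max 0 (- D m s))"

lemma neg_nonneg: "neg s \<ge> 0"
  unfolding neg_def by (intro sum_nonneg) auto

lemma neg_ge: "k \<in> K \<Longrightarrow> max 0 (- D k s) \<le> neg s"
  unfolding neg_def using finK by (intro member_le_sum) auto

lemma neg_continuous: "continuous_on {0..T} neg"
  unfolding neg_def by (intro continuous_intros cont)

lemma negative_part_bound:
  assumes k: "k \<in> K" and ts: "0 \<le> t0" "t0 \<le> s" "s \<le> T"
    and start: "D k t0 \<ge> 0" and M: "\<And>u. u \<in> {t0..s} \<Longrightarrow> neg u \<le> M"
  shows "max 0 (- D k s) \<le> 2 * C * (s - t0) * M"
proof (cases "D k s \<ge> 0")
  case True
  have "0 \<le> M" using M[of s] neg_nonneg[of s] ts by auto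
  then show ?thesis using True C ts by simp
next
  case False
  have sub: "{t0..s} \<subseteq> {0..T}" using ts by auto
  obtain r where r: "t0 \<le> r" "r < s" "D k r \<ge> 0" and nonpos: "\<And>u. u \<in> {r..s} \<Longrightarrow> D k u \<le> 0"
    using last_nonneg_time[OF continuous_on_subset[OF cont[OF k] sub] ts(2) start] False by auto
  have "\<bar>D k u\<bar> + neg u \<le> 2 * M" if "u \<in> {r..s}" for u
    using nonpos[OF that] neg_ge[OF k, of u] M[of u] that r by auto
  moreover have "continuous_on {r..s} (\<lambda>u. \<bar>D k u\<bar> + neg u)"
    using r ts by (intro continuous_intros continuous_on_subset[OF cont[OF k]]
                     continuous_on_subset[OF neg_continuous]) auto
  ultimately have "integral {r..s} (\<lambda>u. \<bar>D k u\<bar> + neg u) \<le> 2 * M * (s - r)"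
    using integral_bound[of r s "\<lambda>u. \<bar>D k u\<bar> + neg u" "2 * M"] r neg_nonneg by auto
  also have "\<dots> \<le> 2 * M * (s - t0)"
    using r M[of s] neg_nonneg[of s] ts by (intro mult_left_mono) auto
  finally have "C * integral {r..s} (\<lambda>u. \<bar>D k u\<bar> + neg u) \<le> C * (2 * M * (s - t0))"
    using C by (rule mult_left_mono)
  moreover have "D k s - D k r \<ge> - C * integral {r..s} (\<lambda>u. \<bar>D k u\<bar> + neg u)"
    using drift[OF k, of r s] r ts unfolding neg_def by auto
  ultimately show ?thesis using r False by (simp add: algebra_simps)
qed

lemma comparison_step:
  assumes h: "h > 0" "2 * C * h * real (card K) < 1"
    and t0: "0 \<le> t0" "t0 \<le> T" and prev: "\<And>k u. k \<in> K \<Longrightarrow> u \<in> {0..t0} \<Longrightarrow> D k u \<ge> 0"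
    and k: "k \<in> K" and u: "u \<in> {0..min T (t0 + h)}"
  shows "D k u \<ge> 0"
proof -
  define t1 where "t1 = min T (t0 + h)"
  have t1: "t0 \<le> t1" "t1 \<le> T" "t1 - t0 \<le> h" unfolding t1_def using t0 h by auto
  have "continuous_on {t0..t1} neg" using continuous_on_subset[OF neg_continuous] t0 t1 by auto
  then obtain us where us: "us \<in> {t0..t1}" and max: "\<And>s. s \<in> {t0..t1} \<Longrightarrow> neg s \<le> neg us"
    using continuous_attains_sup[of "{t0..t1}" neg] t1 by auto
  define M where "M = neg us"
  have "neg s \<le> real (card K) * (2 * C * h * M)" if s: "s \<in> {t0..t1}" for s
  proof -
    have "max 0 (- D m s) \<le> 2 * C * h * M" if m: "m \<in> K" for m
    proof -
      have "max 0 (- D m s) \<le> 2 * C * (s - t0) * M"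
        using negative_part_bound[OF m t0(1), of s M] prev[OF m, of t0] max s t1 t0 unfolding M_def by auto
      also have "\<dots> \<le> 2 * C * h * M"
        using C neg_nonneg[of us] s t1 unfolding M_def by (intro mult_right_mono mult_left_mono) auto
      finally show ?thesis .
    qed
    then show ?thesis unfolding neg_def by (intro sum_bounded_above) auto
  qed
  from this[OF us] have "(1 - 2 * C * h * real (card K)) * M \<le> 0"
    unfolding M_def by (simp add: algebra_simps)
  then have "M = 0" using h neg_nonneg[of us] unfolding M_def by (simp add: mult_le_0_iff)
  show ?thesis
  proof (cases "u \<le> t0")
    case True then show ?thesis using prev[OF k] u by auto
  next
    case False
    then have "u \<in> {t0..t1}" using u unfolding t1_def by auto
    then show ?thesis using neg_ge[OF k, of u] max[of u] \<open>M = 0\<close> unfolding M_def by auto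
  qed
qed

theorem nonneg:
  assumes start: "\<And>k. k \<in> K \<Longrightarrow> D k 0 = 0" and k: "k \<in> K" and t: "0 \<le> t" "t \<le> T"
  shows "D k t \<ge> 0"
proof -
  define h where "h = 1 / (2 * (C + 1) * (real (card K) + 1))"
  have h0: "h > 0" unfolding h_def using C by auto
  have "2 * C * h * real (card K) \<le> 2 * C * h * (real (card K) + 1)"
    using C h0 by (intro mult_left_mono) auto
  also have "\<dots> < 2 * (C + 1) * h * (real (card K) + 1)"
    using h0 by (intro mult_strict_right_mono) auto
  also have "\<dots> = 1"
  proof -
    have "(C + 1) * (real (card K) + 1) > 0" using C by auto
    then show ?thesis unfolding h_def by (simp add: field_simps)
  qed
  finally have h: "h > 0" "2 * C * h * real (card K) < 1" using h0 by auto
  have steps: "D k u \<ge> 0" if "k \<in> K" "u \<in> {0..min T (real n * h)}" for n :: nat and k u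
    using that
  proof (induction n arbitrary: k u)
    case 0 then show ?case using start by auto
  next
    case (Suc n)
    have "min T (min T (real n * h) + h) = min T (real (Suc n) * h)"
      using h by (auto simp: algebra_simps min_def)
    moreover have "0 \<le> real n * h" using h by simp
    ultimately show ?case using comparison_step[OF h, of "min T (real n * h)"] Suc t by auto
  qed
  obtain n :: nat where "T / h \<le> real n" using real_arch_simple by blast
  then have "T \<le> real n * h" using h by (simp add: field_simps)
  then show ?thesis using steps[OF k, of t n] t by auto
qed

end


section \<open>Comparison of gaps in a window\<close>

definition window_path :: "real \<Rightarrow> (int \<Rightarrow> real) \<Rightarrow> (int \<Rightarrow> real \<Rightarrow> real) \<Rightarrow> int \<Rightarrow> int \<Rightarrow> real
      \<Rightarrow> (int \<Rightarrow> real \<Rightarrow> real) \<Rightarrow> (int \<Rightarrow> real \<Rightarrow> real) \<Rightarrow> bool" where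
  "window_path \<beta> x0 W a b T P h \<longleftrightarrow>
     (\<forall>i\<in>{a..b}. continuous_on {0..T} (P i))
     \<and> (\<forall>s\<in>{0..T}. strict_mono_on {a..b} (\<lambda>i. P i s))
     \<and> (\<forall>i\<in>{a..b}. \<forall>t\<in>{0..T}. set_integrable lborel {0..t} (h i)
          \<and> P i t = x0 i + W i t + \<beta> * (LINT s:{0..t}|lborel. h i s))"

(* Two paths with the same noise and initial data: the noise cancels in the
   difference of their gaps, which is beta times an integrated drift. *)
lemma window_gap_difference:
  assumes Q: "window_path \<beta> x0 W a b T Q hQ" and P: "window_path \<beta> x0 W a b T P hP"
    and m: "a \<le> m" "m < b" and t: "t \<in> {0..T}"
  defines "g \<equiv> \<lambda>s. (hQ (m + 1) s - hQ m s) - (hP (m + 1) s - hP m s)"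
  shows "set_integrable lborel {0..t} g
     \<and> gap (\<lambda>i. Q i t) m - gap (\<lambda>i. P i t) m = \<beta> * (LINT s:{0..t}|lborel. g s)"
proof -
  have eqs: "set_integrable lborel {0..t} (hQ i) \<and> Q i t = x0 i + W i t + \<beta> * (LINT s:{0..t}|lborel. hQ i s)"
    "set_integrable lborel {0..t} (hP i) \<and> P i t = x0 i + W i t + \<beta> * (LINT s:{0..t}|lborel. hP i s)"
    if "i \<in> {m, m + 1}" for i
    using Q P m t that unfolding window_path_def by auto
  show ?thesis
    using eqs[of m] eqs[of "m + 1"] unfolding g_def gap_def by (simp add: algebra_simps)
qed

lemma window_gaps_bounded_below:
  assumes P: "window_path \<beta> x0 W a b T P h" and T: "T \<ge> 0"
  obtains c where "c > 0" "\<And>m s. a \<le> m \<Longrightarrow> m < b \<Longrightarrow> s \<in> {0..T} \<Longrightarrow> c \<le> gap (\<lambda>i. P i s) m"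
proof -
  have "\<exists>c>0. \<forall>s\<in>{0..T}. c \<le> gap (\<lambda>i. P i s) m" if m: "m \<in> {a..<b}" for m
  proof -
    have "continuous_on {0..T} (\<lambda>s. gap (\<lambda>i. P i s) m)"
      using P m unfolding window_path_def gap_def by (intro continuous_intros) auto
    then obtain s0 where s0: "s0 \<in> {0..T}" and min: "\<And>s. s \<in> {0..T} \<Longrightarrow> gap (\<lambda>i. P i s0) m \<le> gap (\<lambda>i. P i s) m"
      using continuous_attains_inf[of "{0..T}"] T by fastforce
    have "strict_mono_on {a..b} (\<lambda>i. P i s0)" using P s0 unfolding window_path_def by blast
    then have "P m s0 < P (m + 1) s0" by (rule strict_mono_onD) (use m in auto)
    then have "0 < gap (\<lambda>i. P i s0) m" unfolding gap_def by simp
    then show ?thesis using min by blast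
  qed
  then obtain cm where cm: "\<And>m. m \<in> {a..<b} \<Longrightarrow> cm m > 0 \<and> (\<forall>s\<in>{0..T}. cm m \<le> gap (\<lambda>i. P i s) m)"
    by metis
  define c where "c = Min (insert 1 (cm ` {a..<b}))"
  have "c > 0" unfolding c_def using cm by (subst Min_gr_iff) auto
  moreover have "c \<le> cm m" if "m \<in> {a..<b}" for m unfolding c_def using that by (intro Min_le) auto
  ultimately show ?thesis using that cm by (meson atLeastLessThan_iff order.trans)
qed

lemma window_comparison:
  assumes \<beta>: "\<beta> \<ge> 0" and T: "T \<ge> 0"
    and Q: "window_path \<beta> x0 W a b T Q hQ" and P: "window_path \<beta> x0 W a b T P hP"
    and hQ: "\<And>m s. a \<le> m \<Longrightarrow> m < b \<Longrightarrow> s \<in> {0..T} \<Longrightarrow>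
               gap_drift {a..b} (\<lambda>i. Q i s) m \<le> hQ (m + 1) s - hQ m s"
    and hP: "\<And>m s. a \<le> m \<Longrightarrow> m < b \<Longrightarrow> s \<in> {0..T} \<Longrightarrow>
               hP (m + 1) s - hP m s \<le> gap_drift {a..b} (\<lambda>i. P i s) m"
    and k: "a \<le> k" "k < b" and t: "t \<in> {0..T}"
  shows "gap (\<lambda>i. P i t) k \<le> gap (\<lambda>i. Q i t) k"
proof -
  obtain cQ cP where c: "cQ > 0" "cP > 0"
    and gQ: "\<And>m s. a \<le> m \<Longrightarrow> m < b \<Longrightarrow> s \<in> {0..T} \<Longrightarrow> cQ \<le> gap (\<lambda>i. Q i s) m"
    and gP: "\<And>m s. a \<le> m \<Longrightarrow> m < b \<Longrightarrow> s \<in> {0..T} \<Longrightarrow> cP \<le> gap (\<lambda>i. P i s) m"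
    using window_gaps_bounded_below[OF Q T] window_gaps_bounded_below[OF P T] by metis
  define c where "c = min cQ cP"
  define Cst where "Cst = (1 + real (card {a..b})) / c^2"
  (* D m: excess of the gap m of Q over that of P; g m: its drift; G m: a
     continuous lower bound of that drift given by gap_drift_lower_bound *)
  define D where "D m s = gap (\<lambda>i. Q i s) m - gap (\<lambda>i. P i s) m" for m s
  define G where "G m s = - Cst * (\<bar>D m s\<bar> + (\<Sum>m'\<in>{a..<b}. max 0 (- D m' s)))" for m s
  define g where "g m s = (hQ (m + 1) s - hQ m s) - (hP (m + 1) s - hP m s)" for m s
  have D_int: "set_integrable lborel {0..t'} (g m) \<and> D m t' = \<beta> * (LINT s:{0..t'}|lborel. g m s)"
    if "m \<in> {a..<b}" "t' \<in> {0..T}" for m t'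
    using window_gap_difference[OF Q P, of m t'] that unfolding D_def g_def by auto
  have contD: "continuous_on {0..T} (D m)" if "m \<in> {a..<b}" for m
    using Q P that unfolding window_path_def D_def gap_def by (intro continuous_intros) auto
  have contG: "continuous_on {0..T} (G m)" if "m \<in> {a..<b}" for m
    unfolding G_def using contD that by (intro continuous_intros) auto
  have G_le: "G m s \<le> g m s"
    if "m \<in> {a..<b}" "s \<in> {0..T}" for m s
  proof -
    have "G m s \<le> gap_drift {a..b} (\<lambda>i. Q i s) m - gap_drift {a..b} (\<lambda>i. P i s) m"
      using gap_drift_lower_bound[of c a b "\<lambda>i. P i s" "\<lambda>i. Q i s" m] gQ gP c that
      unfolding G_def Cst_def D_def c_def
      by (force intro: order.trans[OF min.cobounded1] order.trans[OF min.cobounded2])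
    then show ?thesis using hQ[of m s] hP[of m s] that unfolding g_def by auto
  qed
  interpret one_sided_gronwall "{a..<b}" D "\<beta> * Cst" T
  proof
    show "0 \<le> \<beta> * Cst" unfolding Cst_def using \<beta> by auto
    fix m r t' assume m: "m \<in> {a..<b}" and rt: "0 \<le> r" "r \<le> t'" "t' \<le> T"
    have "\<beta> * integral {r..t'} (G m) \<le> D m t' - D m r"
      using integral_form_increment[OF D_int[OF m] G_le[OF m] contG[OF m] \<beta> rt] .
    then show "- (\<beta> * Cst) * integral {r..t'} (\<lambda>s. \<bar>D m s\<bar> + (\<Sum>m'\<in>{a..<b}. max 0 (- D m' s))) \<le> D m t' - D m r"
      unfolding G_def by simp
  qed (auto intro: contD)
  have "D k t \<ge> 0"
  proof (rule nonneg)
    show "D m 0 = 0" if "m \<in> {a..<b}" for m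
      using D_int[OF that, of 0] T by (intro integral_form_start) auto
  qed (use k t in auto)
  then show ?thesis unfolding D_def by simp
qed


section \<open>The windows L_n increase\<close>

lemma Xrg_far_averages:
  assumes X: "Xrg \<alpha> \<rho> p x" and \<alpha>: "\<alpha> > 0" and \<rho>: "\<rho> > 0"
  obtains R where "R > 0" "\<And>m. m \<noteq> 0 \<Longrightarrow> R \<le> real_of_int \<bar>m\<bar> \<Longrightarrow> \<rho> / 2 \<le> Av m (gap x)"
proof -
  have "\<exists>C. \<forall>m. m \<noteq> 0 \<longrightarrow> \<bar>Av m (gap x) - \<rho>\<bar> * real_of_int \<bar>m\<bar> powr \<alpha> \<le> C"
    using X unfolding Xrg_def by (elim conjE)
  then obtain C where C: "\<And>m. m \<noteq> 0 \<Longrightarrow> \<bar>Av m (gap x) - \<rho>\<bar> * real_of_int \<bar>m\<bar> powr \<alpha> \<le> C"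
    by blast
  define C' where "C' = \<bar>C\<bar> + 1"
  have C': "C' > 0" "C < C'" unfolding C'_def by auto
  define R where "R = (2 * C' / \<rho>) powr (1 / \<alpha>)"
  have R: "R > 0" unfolding R_def using C' \<rho> by auto
  show ?thesis
  proof (rule that[OF R])
    fix m :: int assume m: "m \<noteq> 0" "R \<le> real_of_int \<bar>m\<bar>"
    have "R powr \<alpha> = 2 * C' / \<rho>" unfolding R_def using C' \<rho> \<alpha> by (simp add: powr_powr)
    moreover have "R powr \<alpha> \<le> real_of_int \<bar>m\<bar> powr \<alpha>" using m \<alpha> R by (intro powr_mono2) auto
    ultimately have "\<bar>Av m (gap x) - \<rho>\<bar> * (2 * C' / \<rho>) \<le> \<bar>Av m (gap x) - \<rho>\<bar> * real_of_int \<bar>m\<bar> powr \<alpha>"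
      by (intro mult_left_mono) auto
    also have "\<dots> < C'" using C[OF m(1)] C' by linarith
    finally have "\<bar>Av m (gap x) - \<rho>\<bar> * 2 < \<rho>" using C' \<rho> by (simp add: field_simps)
    then show "\<rho> / 2 \<le> Av m (gap x)" by (simp add: abs_if split: if_splits)
  qed
qed

lemma Xrg_unbounded:
  assumes X: "Xrg \<alpha> \<rho> p x" and \<alpha>: "\<alpha> > 0" and \<rho>: "\<rho> > 0"
  shows "\<exists>i. x i > N" "\<exists>i. x i < N"
proof -
  obtain R where R: "R > 0" "\<And>m. m \<noteq> 0 \<Longrightarrow> R \<le> real_of_int \<bar>m\<bar> \<Longrightarrow> \<rho> / 2 \<le> Av m (gap x)"
    using Xrg_far_averages[OF assms] by blast
  define M where "M = nat \<lceil>max R (2 * \<bar>N - x 0\<bar> / \<rho>)\<rceil> + 1"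
  have M: "M \<ge> 1" "R \<le> real M" "2 * \<bar>N - x 0\<bar> / \<rho> < real M" unfolding M_def by linarith+
  then have big: "\<bar>N - x 0\<bar> < real M * (\<rho> / 2)" using \<rho> by (simp add: field_simps)
  have Mpos: "real M > 0" using M by simp
  have "Av (int M) (gap x) = (x (int M) - x 0) / real M"
    unfolding Av_def gap_def telescope[of 0 "int M" x, simplified] by simp
  then have "x (int M) - x 0 = real M * Av (int M) (gap x)" using Mpos by simp
  also have "\<dots> \<ge> real M * (\<rho> / 2)" using R(2)[of "int M"] M by (intro mult_left_mono) auto
  finally have "x (int M) - x 0 \<ge> real M * (\<rho> / 2)" .
  then show "\<exists>i. x i > N" using big by (intro exI[of _ "int M"]) linarith
  have "Av (- int M) (gap x) = (x 0 - x (- int M)) / real M"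
    unfolding Av_def gap_def telescope[of "- int M" 0 x, simplified] by simp
  then have "x 0 - x (- int M) = real M * Av (- int M) (gap x)" using Mpos by simp
  also have "\<dots> \<ge> real M * (\<rho> / 2)" using R(2)[of "- int M"] M by (intro mult_left_mono) auto
  finally have "x 0 - x (- int M) \<ge> real M * (\<rho> / 2)" .
  then show "\<exists>i. x i < N" using big by (intro exI[of _ "- int M"]) linarith
qed

lemma greatest_below_level:
  assumes W: "Wconf x" and above: "x i0 > N" and below: "x i1 < N"
  shows "x (GREATEST i. x i < N) < N" "\<And>i. x i < N \<Longrightarrow> i \<le> (GREATEST i. x i < N)"
proof -
  have bnd: "i < i0" if "x i < N" for i
    using Wconf_mono[OF W, of i0 i] that above by (cases "i0 < i") (auto simp: not_less_iff_gr_or_eq)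
  define S where "S = {i1..i0} \<inter> {i. x i < N}"
  have S: "finite S" "i1 \<in> S" unfolding S_def using below bnd[OF below] by auto
  have gmax: "i \<le> Max S" if "x i < N" for i
    using Max_ge[OF S] bnd[OF that] that by (cases "i < i1") (auto simp: S_def)
  have max_in: "Max S \<in> S" using Max_in[OF S(1)] S(2) by auto
  have "(GREATEST i. x i < N) = Max S"
    by (rule Greatest_equality) (use max_in gmax in \<open>auto simp: S_def\<close>)
  then show "x (GREATEST i. x i < N) < N" "\<And>i. x i < N \<Longrightarrow> i \<le> (GREATEST i. x i < N)"
    using max_in gmax by (auto simp: S_def)
qed

lemma least_above_level:
  assumes W: "Wconf x" and above: "x i1 > N" and below: "x i0 < N"
  shows "x (LEAST i. x i > N) > N" "\<And>i. x i > N \<Longrightarrow> (LEAST i. x i > N) \<le> i"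
proof -
  have bnd: "i > i0" if "x i > N" for i
    using Wconf_mono[OF W, of i i0] that below by (cases "i < i0") (auto simp: not_less_iff_gr_or_eq)
  define S where "S = {i0..i1} \<inter> {i. x i > N}"
  have S: "finite S" "i1 \<in> S" unfolding S_def using above bnd[OF above] by auto
  have gmin: "Min S \<le> i" if "x i > N" for i
    using Min_le[OF S] bnd[OF that] that by (cases "i > i1") (auto simp: S_def)
  have min_in: "Min S \<in> S" using Min_in[OF S(1)] S(2) by auto
  have "(LEAST i. x i > N) = Min S"
    by (rule Least_equality) (use min_in gmin in \<open>auto simp: S_def\<close>)
  then show "x (LEAST i. x i > N) > N" "\<And>i. x i > N \<Longrightarrow> (LEAST i. x i > N) \<le> i"
    using min_in gmin by (auto simp: S_def)
qed

lemma Ln_mono: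
  assumes X: "Xrg \<alpha> \<rho> p x" and \<alpha>: "\<alpha> > 0" and \<rho>: "\<rho> > 0"
  shows "iminus x (Suc n) \<le> iminus x n" "iplus x n \<le> iplus x (Suc n)"
proof -
  have W: "Wconf x" using X unfolding Xrg_def by auto
  have cross: "\<exists>i. x i > N" "\<exists>i. x i < N" for N using Xrg_unbounded[OF assms] by auto
  have "x (iplus x n) < real (Suc n)"
    using greatest_below_level(1)[OF W] cross[of "real n"] unfolding iplus_def by fastforce
  then show "iplus x n \<le> iplus x (Suc n)"
    using greatest_below_level(2)[OF W] cross[of "real (Suc n)"] unfolding iplus_def by blast
  have "x (iminus x n) > - real (Suc n)"
    using least_above_level(1)[OF W] cross[of "- real n"] unfolding iminus_def by fastforce
  then show "iminus x (Suc n) \<le> iminus x n"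
    using least_above_level(2)[OF W] cross[of "- real (Suc n)"] unfolding iminus_def by blast
qed


lemma finite_DBM_window:
  assumes P: "finite_DBM_path \<beta> L xin Bw P" and L: "finite L" "{a..b} \<subseteq> L"
  shows "window_path \<beta> xin Bw a b T P (\<lambda>i s. finite_drift L (\<lambda>j. P j s) i)"
    and "\<And>m s. a \<le> m \<Longrightarrow> m < b \<Longrightarrow> s \<in> {0..T} \<Longrightarrow>
           finite_drift L (\<lambda>j. P j s) (m + 1) - finite_drift L (\<lambda>j. P j s) m \<le> gap_drift {a..b} (\<lambda>i. P i s) m"
proof -
  have ordered: "strict_mono_on L (\<lambda>i. P i s)" if "s \<ge> 0" for s
    using P that unfolding finite_DBM_path_def by (auto intro: strict_mono_onI)
  show "window_path \<beta> xin Bw a b T P (\<lambda>i s. finite_drift L (\<lambda>j. P j s) i)"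
    unfolding window_path_def
  proof (intro conjI ballI)
    show "continuous_on {0..T} (P i)" if "i \<in> {a..b}" for i
      using P L that continuous_on_subset[of "{0..}" "P i" "{0..T}"] unfolding finite_DBM_path_def by auto
    show "strict_mono_on {a..b} (\<lambda>i. P i s)" if "s \<in> {0..T}" for s
      using monotone_on_subset[OF ordered L(2)] that by auto
  qed (use P L in \<open>auto simp: finite_DBM_path_def finite_drift_def\<close>)
  fix m s assume "a \<le> m" "m < b" "s \<in> {0..T}"
  then show "finite_drift L (\<lambda>j. P j s) (m + 1) - finite_drift L (\<lambda>j. P j s) m \<le> gap_drift {a..b} (\<lambda>i. P i s) m"
    using gap_drift_antimono[OF L(1,2) _ _ ordered] unfolding gap_drift_def by auto
qed

lemma DBM_window:
  assumes X: "DBM_path \<beta> \<alpha> \<rho> p xin Bw X"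
  shows "window_path \<beta> xin Bw a b T X (\<lambda>i s. phi (\<lambda>j. X j s) i)"
    and "\<And>m s. a \<le> m \<Longrightarrow> m < b \<Longrightarrow> s \<in> {0..T} \<Longrightarrow>
           phi (\<lambda>j. X j s) (m + 1) - phi (\<lambda>j. X j s) m \<le> gap_drift {a..b} (\<lambda>i. X i s) m"
proof -
  have W: "Wconf (\<lambda>i. X i s)" if "s \<ge> 0" for s
    using X that unfolding DBM_path_def XrgT_def by auto
  show "window_path \<beta> xin Bw a b T X (\<lambda>i s. phi (\<lambda>j. X j s) i)"
    unfolding window_path_def
  proof (intro conjI ballI)
    show "continuous_on {0..T} (X i)" for i
      using X continuous_on_subset[of "{0..}" "X i" "{0..T}"] unfolding DBM_path_def XrgT_def by auto
    show "strict_mono_on {a..b} (\<lambda>i. X i s)" if "s \<in> {0..T}" for s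
      using Wconf_mono[OF W] that by (auto intro: strict_mono_onI)
  qed (use X in \<open>auto simp: DBM_path_def\<close>)
  fix m s assume "a \<le> m" "m < b" "s \<in> {0..T}"
  then show "phi (\<lambda>j. X j s) (m + 1) - phi (\<lambda>j. X j s) m \<le> gap_drift {a..b} (\<lambda>i. X i s) m"
    using X W[of s] by (intro phi_gap_le_gap_drift) (auto simp: DBM_path_def)
qed

theorem pathwise_gap_monotonicity:
  fixes Xw :: "int \<Rightarrow> real \<Rightarrow> real" and Xnw :: "nat \<Rightarrow> int \<Rightarrow> real \<Rightarrow> real"
  assumes \<beta>: "\<beta> \<ge> 1" and \<alpha>: "0 < \<alpha>" and \<rho>: "\<rho> > 0" and xin: "Xrg \<alpha> \<rho> p xin"
    and X: "DBM_path \<beta> \<alpha> \<rho> p xin Bw Xw"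
    and Xn: "\<And>n. n \<ge> 1 \<Longrightarrow> finite_DBM_path \<beta> (Ln xin n) xin Bw (Xnw n)"
    and t: "t \<ge> 0" and n: "n \<ge> 1"
  shows "Yinf (Ln xin (Suc n)) (Xnw (Suc n)) k t \<le> Yinf (Ln xin n) (Xnw n) k t
       \<and> ereal (Xw (k + 1) t - Xw k t) \<le> Yinf (Ln xin n) (Xnw n) k t"
proof (cases "k \<in> Ln xin n \<and> k + 1 \<in> Ln xin n")
  case False
  then show ?thesis unfolding Yinf_def by auto
next
  case True
  define a b where "a = iminus xin n" and "b = iplus xin n"
  have L: "Ln xin n = {a..b}" and k: "a \<le> k" "k < b" using True unfolding Ln_def a_def b_def by auto
  have L': "{a..b} \<subseteq> Ln xin (Suc n)"
    using Ln_mono[OF xin \<alpha> \<rho>, of n] unfolding L Ln_def a_def b_def by auto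
  have T: "t \<in> {0..t}" using t by auto
  have XnS: "finite_DBM_path \<beta> (Ln xin (Suc n)) xin Bw (Xnw (Suc n))" using Xn by simp
  note compare = window_comparison[of \<beta> t xin Bw a b "Xnw n", OF _ t
      finite_DBM_window(1)[OF Xn[OF n, unfolded L]] _ _ _ k T]
  have "gap (\<lambda>i. Xnw (Suc n) i t) k \<le> gap (\<lambda>i. Xnw n i t) k"
    using \<beta> finite_DBM_window[OF XnS _ L'] by (intro compare) (auto simp: gap_drift_def Ln_def)
  moreover have "gap (\<lambda>i. Xw i t) k \<le> gap (\<lambda>i. Xnw n i t) k"
    using \<beta> DBM_window[OF X] by (intro compare) (auto simp: gap_drift_def)
  ultimately show ?thesis using True L L' unfolding Yinf_def gap_def by auto
qed

theorem lemma7p1: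
  fixes M :: "'w measure"
    and \<beta> \<alpha> \<rho> p :: real
    and xin :: "int \<Rightarrow> real"
    and B :: "int \<Rightarrow> real \<Rightarrow> 'w \<Rightarrow> real"
    and X :: "int \<Rightarrow> real \<Rightarrow> 'w \<Rightarrow> real"
    and Xn :: "nat \<Rightarrow> int \<Rightarrow> real \<Rightarrow> 'w \<Rightarrow> real"
  assumes "prob_space M"
    and "\<beta> \<ge> 1" and "0 < \<alpha>" and "\<alpha> < 1" and "\<rho> > 0" and "p > 1"
    and "Xrg \<alpha> \<rho> p xin"
    and "indep_BM_family M B"
    and "\<forall>i t. X i t \<in> borel_measurable M"
    and "AE \<omega> in M. DBM_path \<beta> \<alpha> \<rho> p xin (\<lambda>i t. B i t \<omega>) (\<lambda>i t. X i t \<omega>)"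
    and "\<forall>n i t. n \<ge> 1 \<longrightarrow> Xn n i t \<in> borel_measurable M"
    and "\<forall>n. n \<ge> 1 \<longrightarrow> (AE \<omega> in M. finite_DBM_path \<beta> (Ln xin n) xin
                                     (\<lambda>i t. B i t \<omega>) (\<lambda>i t. Xn n i t \<omega>))"
  shows "AE \<omega> in M. \<forall>t\<ge>0. \<forall>k::int. \<forall>n::nat. n \<ge> 1 \<longrightarrow>
           Yinf (Ln xin (Suc n)) (\<lambda>i s. Xn (Suc n) i s \<omega>) k t
             \<le> Yinf (Ln xin n) (\<lambda>i s. Xn n i s \<omega>) k t
           \<and> ereal (X (k + 1) t \<omega> - X k t \<omega>) \<le> Yinf (Ln xin n) (\<lambda>i s. Xn n i s \<omega>) k t"
proof -
  have "AE \<omega> in M. \<forall>n. n \<ge> 1 \<longrightarrow> finite_DBM_path \<beta> (Ln xin n) xin (\<lambda>i t. B i t \<omega>) (\<lambda>i t. Xn n i t \<omega>)"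
    unfolding AE_all_countable
  proof
    fix n :: nat
    show "AE \<omega> in M. n \<ge> 1 \<longrightarrow> finite_DBM_path \<beta> (Ln xin n) xin (\<lambda>i t. B i t \<omega>) (\<lambda>i t. Xn n i t \<omega>)"
      using assms(12) by (cases "n \<ge> 1") auto
  qed
  with assms(10) show ?thesis
  proof eventually_elim
    case (elim \<omega>)
    then show ?case
      using pathwise_gap_monotonicity[OF assms(2,3,5,7) elim(1), of "\<lambda>n i s. Xn n i s \<omega>"] by auto
  qed
qed

end
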